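(* Let $p$ be an odd prime and $A\subseteq \mathbb{F}_p$. Then \[ \left| T(A) - \left( \frac{|A|^6}{p} + 2 |A|^4 \right) \right| \leq p\, |A|^3. \]
   Context: $\mathbb{F}_p$ is the field with $p$ elements. A line means an affine line in $\mathbb{F}_p^2$. For a line $\ell$, $i(\ell)$ denotes the number of points of $A\times A$ lying on $\ell$, and $T(A)=\sum_{\text{all lines } \ell} i(\ell)^3$ is the number of collinear triples in $A\times A$. *)

theory Defs
  imports Complex_Main "HOL-Library.Cardinality" "HOL-Computational_Algebra.Primes"
begin

text \<open>The field F_p is modelled by a finite field type 'a with CARD('a) = p prime.
  An affine line in 'a^2 is the point set {(x,y). a*x + b*y = c} with (a,b) \<noteq> (0,0);
  lines are identified as point sets, so each line is counted once.\<close>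

definition affine_lines :: "('a::field \<times> 'a) set set" where
  "affine_lines = {{v. a * fst v + b * snd v = c} | a b c. (a, b) \<noteq> (0, 0)}"

definition incid :: "'a::field set \<Rightarrow> ('a \<times> 'a) set \<Rightarrow> nat" where
  "incid A l = card (l \<inter> (A \<times> A))"

definition collinear_triples :: "'a::{field,finite} set \<Rightarrow> nat" where
  "collinear_triples A = (\<Sum>l\<in>affine_lines. incid A l ^ 3)"

end

theory Submission
  imports Defs
begin

text \<open>The q vertical lines of a finite field of order q contribute |A|^4 to T(A). The q^2 lines
  y = m x + c have incidence counts X with 0 \<le> X \<le> |A|, \<Sum>X = q|A|^2 and
  \<Sum>X^2 = q|A|^2 + |A|^4 - |A|^3, since two points of A \<times> A with distinct abscissae lie
  on exactly one such line. With a = |A|^2/q the mean of X, summing (X - a)^2 X \<ge> 0 and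
  (X - a)^2 (X - |A|) \<le> 0 traps \<Sum>X^3 in an interval of width about q|A|^3.\<close>

definition nonvertical_line :: "'a::field \<Rightarrow> 'a \<Rightarrow> ('a \<times> 'a) set" where
  "nonvertical_line m c = {(x, y). y = m * x + c}"

definition vertical_line :: "'a::field \<Rightarrow> ('a \<times> 'a) set" where
  "vertical_line c = {(x, y). x = c}"

lemma affine_linesI:
  "(a, b) \<noteq> (0, 0) \<Longrightarrow> {v. a * fst v + b * snd v = c} \<in> affine_lines"
  unfolding affine_lines_def by blast

lemma affine_lines_eq:
  "(affine_lines :: ('a::field \<times> 'a) set set) =
     case_prod nonvertical_line ` UNIV \<union> range vertical_line"
proof (intro equalityI subsetI)
  fix l :: "('a \<times> 'a) set"
  assume "l \<in> affine_lines"
  then obtain a b c where l: "l = {v. a * fst v + b * snd v = c}" and ab: "(a, b) \<noteq> (0, 0)"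
    unfolding affine_lines_def by blast
  show "l \<in> case_prod nonvertical_line ` UNIV \<union> range vertical_line"
  proof (cases "b = 0")
    case True
    with ab have "l = vertical_line (c / a)"
      unfolding l vertical_line_def by (auto simp: field_simps)
    then show ?thesis by blast
  next
    case False
    then have "l = nonvertical_line (- a / b) (c / b)"
      unfolding l nonvertical_line_def by (auto simp: field_simps)
    then show ?thesis by force
  qed
next
  fix l :: "('a \<times> 'a) set"
  assume "l \<in> case_prod nonvertical_line ` UNIV \<union> range vertical_line"
  then consider m c where "l = nonvertical_line m c" | c where "l = vertical_line c"
    by auto
  then show "l \<in> affine_lines"
  proof cases
    case (1 m c)
    then have "l = {v. (- m) * fst v + 1 * snd v = c}"
      unfolding nonvertical_line_def by (auto simp: algebra_simps)
    then show ?thesis using affine_linesI[of "- m" 1 c] by simp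
  next
    case (2 c)
    then have "l = {v. 1 * fst v + 0 * snd v = c}"
      unfolding vertical_line_def by auto
    then show ?thesis using affine_linesI[of 1 0 c] by simp
  qed
qed

lemma inj_nonvertical_line: "inj (case_prod (nonvertical_line :: 'a::field \<Rightarrow> _))"
proof (rule injI, clarify)
  fix m c m' c' :: 'a
  assume eq: "nonvertical_line m c = nonvertical_line m' c'"
  have "(0, c) \<in> nonvertical_line m c" "(1, m + c) \<in> nonvertical_line m c"
    by (simp_all add: nonvertical_line_def)
  then have "(0, c) \<in> nonvertical_line m' c'" "(1, m + c) \<in> nonvertical_line m' c'"
    by (simp_all add: eq)
  then show "m = m' \<and> c = c'"
    by (simp add: nonvertical_line_def)
qed

lemma inj_vertical_line: "inj (vertical_line :: 'a::field \<Rightarrow> _)"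
  by (rule injI) (auto simp: vertical_line_def set_eq_iff)

lemma nonvertical_line_neq_vertical_line: "nonvertical_line m c \<noteq> vertical_line (d::'a::field)"
proof
  assume "nonvertical_line m c = vertical_line d"
  then have "(d, 0) \<in> nonvertical_line m c" "(d, 1) \<in> nonvertical_line m c"
    unfolding vertical_line_def by auto
  then show False unfolding nonvertical_line_def by simp
qed

lemma incid_nonvertical_line:
  "incid A (nonvertical_line m c) = card {x \<in> A. m * x + c \<in> A}"
proof -
  have "nonvertical_line m c \<inter> A \<times> A = (\<lambda>x. (x, m * x + c)) ` {x \<in> A. m * x + c \<in> A}"
    unfolding nonvertical_line_def by auto
  then show ?thesis
    unfolding incid_def by (simp add: card_image inj_on_def)
qed

lemma incid_vertical_line:
  "incid A (vertical_line c) = (if c \<in> A then card A else 0)"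
proof -
  have "vertical_line c \<inter> A \<times> A = (if c \<in> A then {c} \<times> A else {})"
    unfolding vertical_line_def by auto
  then show ?thesis
    unfolding incid_def by (simp add: card_cartesian_product_singleton)
qed

lemma collinear_triples_eq:
  fixes A :: "'a::{field,finite} set"
  shows "collinear_triples A = (\<Sum>(m, c)\<in>UNIV. card {x \<in> A. m * x + c \<in> A} ^ 3) + card A ^ 4"
proof -
  have "collinear_triples A =
          (\<Sum>l\<in>case_prod nonvertical_line ` UNIV. incid A l ^ 3) + (\<Sum>l\<in>range vertical_line. incid A l ^ 3)"
    unfolding collinear_triples_def affine_lines_eq
    by (rule sum.union_disjoint) (auto simp: nonvertical_line_neq_vertical_line)
  also have "(\<Sum>l\<in>case_prod nonvertical_line ` UNIV. incid A l ^ 3) =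
               (\<Sum>(m, c)\<in>UNIV. card {x \<in> A. m * x + c \<in> A} ^ 3)"
    by (subst sum.reindex[OF inj_nonvertical_line]) (simp add: incid_nonvertical_line split_def)
  also have "(\<Sum>l\<in>range vertical_line. incid A l ^ 3) = card A ^ 4"
    by (simp add: sum.reindex[OF inj_vertical_line] incid_vertical_line if_distrib sum.If_cases
                  power_eq_if)
  finally show ?thesis .
qed

lemma card_nonvertical_lines_meeting_column:
  fixes A :: "'a::{field,finite} set"
  shows "card {(m, c). m * x + c \<in> A} = CARD('a) * card A"
proof -
  let ?f = "\<lambda>(m, c). (m, m * x + c :: 'a)"
  have "inj ?f" by (auto intro: injI)
  moreover have "surj ?f"
    by (auto intro!: surjI[where f = "\<lambda>(m, y). (m, y - m * x)"])
  moreover have "{(m, c). m * x + c \<in> A} = ?f -` (UNIV \<times> A)" by auto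
  ultimately show ?thesis by (simp add: card_vimage_inj card_cartesian_product)
qed

lemma card_nonvertical_lines_meeting_two_columns:
  fixes A :: "'a::{field,finite} set"
  assumes "x \<noteq> y"
  shows "card {(m, c). m * x + c \<in> A \<and> m * y + c \<in> A} = card A ^ 2"
proof -
  let ?f = "\<lambda>(m, c). (m * x + c, m * y + c :: 'a)"
  have inj: "inj ?f"
  proof (rule injI, clarify)
    fix m c m' c' :: 'a
    assume "m * x + c = m' * x + c'" "m * y + c = m' * y + c'"
    moreover have "(m - m') * (x - y) = (m * x + c - (m' * x + c')) - (m * y + c - (m' * y + c'))"
      by (simp add: algebra_simps)
    ultimately have "(m - m') * (x - y) = 0" by simp
    with assms have "m = m'" by simp
    with \<open>m * x + c = m' * x + c'\<close> show "m = m' \<and> c = c'" by simp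
  qed
  then have "surj ?f" by (simp add: finite_UNIV_inj_surj)
  moreover have "{(m, c). m * x + c \<in> A \<and> m * y + c \<in> A} = ?f -` (A \<times> A)" by auto
  ultimately show ?thesis using inj
    by (simp add: card_vimage_inj card_cartesian_product power2_eq_square)
qed

lemma sum_nonvertical_incidences:
  fixes A :: "'a::{field,finite} set"
  shows "(\<Sum>(m, c)\<in>UNIV. card {x \<in> A. m * x + c \<in> A}) = CARD('a) * card A ^ 2"
proof -
  have "(\<Sum>(m, c)\<in>UNIV. card {x \<in> A. m * x + c \<in> A}) = (CARD('a) * card A) * card A"
    unfolding split_def
    by (rule sum_multicount) (use card_nonvertical_lines_meeting_column[of _ A] in \<open>simp_all add: split_def\<close>)
  then show ?thesis by (simp add: power2_eq_square)
qed

lemma sum_if_eq_add: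
  fixes a b :: "'b::comm_semiring_1"
  assumes "finite A" and "x \<in> A"
  shows "(\<Sum>y\<in>A. if x = y then a else b) + b = a + of_nat (card A) * b"
proof -
  have "(\<Sum>y\<in>A. if x = y then a else b) + (\<Sum>y\<in>A. if x = y then b else 0) =
          (\<Sum>y\<in>A. b + (if x = y then a else 0))"
    by (simp only: sum.distrib[symmetric]) (rule sum.cong, simp_all add: add.commute)
  with assms show ?thesis
    by (simp add: sum.distrib add.commute)
qed

lemma sum_sq_nonvertical_incidences:
  fixes A :: "'a::{field,finite} set"
  shows "(\<Sum>(m, c)\<in>UNIV. card {x \<in> A. m * x + c \<in> A} ^ 2) + card A ^ 3
           = CARD('a) * card A ^ 2 + card A ^ 4"
proof -
  let ?R = "\<lambda>(m, c) (x, y). m * x + c \<in> A \<and> m * y + c \<in> A"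
  let ?k = "\<lambda>(x, y). if x = y then CARD('a) * card A else card A ^ 2"
  have sq: "card {x \<in> A. m * x + c \<in> A} ^ 2 =
              card {(x, y) \<in> A \<times> A. m * x + c \<in> A \<and> m * y + c \<in> A}" for m c
  proof -
    have "{(x, y) \<in> A \<times> A. m * x + c \<in> A \<and> m * y + c \<in> A} =
            {x \<in> A. m * x + c \<in> A} \<times> {x \<in> A. m * x + c \<in> A}" by auto
    then show ?thesis by (simp add: card_cartesian_product power2_eq_square)
  qed
  have "(\<Sum>(m, c)\<in>UNIV. card {x \<in> A. m * x + c \<in> A} ^ 2) =
          (\<Sum>w\<in>UNIV. card {p \<in> A \<times> A. ?R w p})"
    by (rule sum.cong) (auto simp: sq intro!: arg_cong[where f = card])
  also have "\<dots> = sum ?k (A \<times> A)"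
  proof (rule sum_multicount_gen)
    show "\<forall>p\<in>A \<times> A. card {w \<in> UNIV. ?R w p} = ?k p"
      using card_nonvertical_lines_meeting_column[of _ A]
        card_nonvertical_lines_meeting_two_columns[of _ _ A]
      by (auto simp: split_def)
  qed simp_all
  also have "\<dots> = (\<Sum>x\<in>A. \<Sum>y\<in>A. ?k (x, y))"
    by (simp add: sum.cartesian_product)
  finally have "(\<Sum>(m, c)\<in>UNIV. card {x \<in> A. m * x + c \<in> A} ^ 2) + card A ^ 3 =
                  (\<Sum>x\<in>A. (\<Sum>y\<in>A. ?k (x, y)) + card A ^ 2)"
    by (simp add: sum.distrib power_eq_if)
  also have "\<dots> = (\<Sum>x\<in>A. CARD('a) * card A + card A ^ 3)"
  proof (rule sum.cong)
    fix x assume "x \<in> A"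
    then show "(\<Sum>y\<in>A. ?k (x, y)) + card A ^ 2 = CARD('a) * card A + card A ^ 3"
      using sum_if_eq_add[of A x "CARD('a) * card A" "card A ^ 2"]
      by (simp add: power2_eq_square power3_eq_cube)
  qed simp
  finally show ?thesis by (simp add: power_eq_if algebra_simps)
qed

lemma sum_power3_bounds:
  fixes X :: "'i \<Rightarrow> real"
  assumes X: "\<And>i. i \<in> I \<Longrightarrow> 0 \<le> X i \<and> X i \<le> b"
  shows "2 * a * (\<Sum>i\<in>I. X i ^ 2) - a^2 * (\<Sum>i\<in>I. X i) \<le> (\<Sum>i\<in>I. X i ^ 3)"
    and "(\<Sum>i\<in>I. X i ^ 3) \<le>
           (2 * a + b) * (\<Sum>i\<in>I. X i ^ 2) - (a^2 + 2 * a * b) * (\<Sum>i\<in>I. X i) + a^2 * b * card I"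
proof -
  have "0 \<le> (\<Sum>i\<in>I. (X i - a)^2 * X i)"
    using X by (intro sum_nonneg) simp
  also have "\<dots> = (\<Sum>i\<in>I. X i ^ 3 - 2 * a * X i ^ 2 + a^2 * X i)"
    by (rule sum.cong) (simp_all add: power2_eq_square power3_eq_cube algebra_simps)
  finally show "2 * a * (\<Sum>i\<in>I. X i ^ 2) - a^2 * (\<Sum>i\<in>I. X i) \<le> (\<Sum>i\<in>I. X i ^ 3)"
    by (simp add: sum.distrib sum_subtractf sum_distrib_left)
  have "(\<Sum>i\<in>I. X i ^ 3 - (2 * a + b) * X i ^ 2 + (a^2 + 2 * a * b) * X i - a^2 * b) =
          (\<Sum>i\<in>I. (X i - a)^2 * (X i - b))"
    by (rule sum.cong) (simp_all add: power2_eq_square power3_eq_cube algebra_simps)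
  also have "\<dots> \<le> 0"
    using X by (intro sum_nonpos) (simp add: mult_nonneg_nonpos)
  finally show "(\<Sum>i\<in>I. X i ^ 3) \<le>
           (2 * a + b) * (\<Sum>i\<in>I. X i ^ 2) - (a^2 + 2 * a * b) * (\<Sum>i\<in>I. X i) + a^2 * b * card I"
    by (simp add: sum.distrib sum_subtractf flip: sum_distrib_left) (simp add: algebra_simps)
qed

lemma collinear_triples_bounds:
  fixes A :: "'a::{field,finite} set"
  defines "n \<equiv> real (card A)" and "q \<equiv> real CARD('a)"
  shows "3 * n^4 + n^6 / q - 2 * n^5 / q \<le> real (collinear_triples A)"
    and "real (collinear_triples A) \<le> 2 * n^4 + n^6 / q - 2 * n^5 / q + q * n^3"
proof -
  define X where "X = (\<lambda>(m, c). real (card {x \<in> A. m * x + c \<in> A}))"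
  have q: "q > 0" unfolding q_def by simp
  have T: "real (collinear_triples A) = (\<Sum>w\<in>UNIV. X w ^ 3) + n^4"
    unfolding collinear_triples_eq X_def n_def by (simp add: split_def)
  have S1: "(\<Sum>w\<in>UNIV. X w) = q * n^2"
    using arg_cong[OF sum_nonvertical_incidences[of A], of real]
    unfolding X_def n_def q_def by (simp add: split_def)
  have S2: "(\<Sum>w\<in>UNIV. X w ^ 2) = q * n^2 + n^4 - n^3"
    using arg_cong[OF sum_sq_nonvertical_incidences[of A], of real]
    unfolding X_def n_def q_def by (simp add: split_def)
  have S0: "real (card (UNIV :: ('a \<times> 'a) set)) = q^2"
    unfolding q_def by (simp add: power2_eq_square)
  have X: "0 \<le> X w \<and> X w \<le> n" for w
    unfolding X_def n_def by (auto simp: split_def intro: card_mono)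
  note bounds = sum_power3_bounds[of UNIV X n "n^2 / q", OF X, unfolded S0 S1 S2]
  have "2 * (n^2 / q) * (q * n^2 + n^4 - n^3) - (n^2 / q)^2 * (q * n^2) = 2 * n^4 + n^6 / q - 2 * n^5 / q"
    using q by (simp add: field_simps) (simp add: algebra_simps eval_nat_numeral)
  with bounds(1) show "3 * n^4 + n^6 / q - 2 * n^5 / q \<le> real (collinear_triples A)"
    unfolding T by linarith
  have "(2 * (n^2 / q) + n) * (q * n^2 + n^4 - n^3) - ((n^2 / q)^2 + 2 * (n^2 / q) * n) * (q * n^2)
          + (n^2 / q)^2 * n * q^2 = n^4 + n^6 / q - 2 * n^5 / q + q * n^3"
    using q by (simp add: field_simps) (simp add: algebra_simps eval_nat_numeral)
  with bounds(2) show "real (collinear_triples A) \<le> 2 * n^4 + n^6 / q - 2 * n^5 / q + q * n^3"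
    unfolding T by linarith
qed

theorem mainTheorem3:
  fixes A :: "'a::{field,finite} set"
  assumes "prime (CARD('a))" and "odd (CARD('a))"
  shows "\<bar>real (collinear_triples A) - (real (card A) ^ 6 / real CARD('a) + 2 * real (card A) ^ 4)\<bar>
           \<le> real CARD('a) * real (card A) ^ 3"
proof -
  define n where "n = real (card A)"
  define q where "q = real CARD('a)"
  have "0 \<le> n" "n \<le> q" "0 < q"
    unfolding n_def q_def by (simp_all add: card_mono)
  then have "n^5 \<le> q * n^4" "n^4 \<le> q * n^3"
    using mult_right_mono[of n q "n^4"] mult_right_mono[of n q "n^3"]
    by (simp_all add: power_Suc[symmetric])
  with \<open>0 \<le> n\<close> \<open>0 < q\<close> have "0 \<le> n^5 / q" "n^5 / q \<le> n^4" "n^4 \<le> q * n^3"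
    by (simp_all add: pos_divide_le_eq mult.commute)
  with collinear_triples_bounds[of A] show ?thesis
    unfolding n_def[symmetric] q_def[symmetric] by (simp add: abs_le_iff)
qed

end
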